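(* For every permutation $\sigma$ and every Cayley permutation $y$, $$\mathrm{Flat}(\sigma)=\gamma\bigl(\mathrm{RGF}[\sigma^{-1}]\bigr)\qquad\text{and}\qquad\gamma\bigl(\mathrm{RGF}[y]\bigr)=\mathrm{Flat}\bigl(\gamma(y)\bigr).$$ In particular $|\mathrm{Flat}_n(\sigma)|=|\mathrm{RGF}_n[\sigma^{-1}]|$ for every $n$.
   Context: A Cayley permutation of length $n$ is a word of positive integers in which every integer from $1$ to its maximum occurs. Containment $y\le x$: there are indices $i_1<\dots<i_k$ ($k$ the length of $y$) with $x(i_s)<x(i_t)\iff y(s)<y(t)$ and $x(i_s)=x(i_t)\iff y(s)=y(t)$; otherwise $x$ avoids $y$. For $x$ of length $n$, $\gamma(x)$ is the permutation of $[n]$ obtained by sorting the pairs $(x(i),i)$ increasingly by first coordinate, ties by decreasing second coordinate, and reading off the second coordinates; $\gamma(E)=\{\gamma(x):x\in E\}$. $x\sim y$ iff $\gamma(x)=\gamma(y)$; $[y]$ is the class of $y$; for a set $E$ of Cayley permutations, $E[y]$ is the set of elements of $E$ avoiding every element of $[y]$. $\mathrm{RGF}_n$ (restricted growth functions) is the set of Cayley permutations $x$ of length $n$ with $x(1)=1$ (if $n\ge1$) and $x(i+1)\le\max\{x(1),\dots,x(i)\}+1$ for $1\le i<n$; $\mathrm{RGF}=\bigcup_n\mathrm{RGF}_n$. $\mathrm{Flat}$ is the set of permutations avoiding the vincular pattern $23\text{-}1$, i.e. permutations $\pi$ with no indices $i$ and $k>i+1$ such that $\pi(k)<\pi(i)<\pi(i+1)$;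 $\mathrm{Flat}_n(\sigma)$ is the set of elements of $\mathrm{Flat}$ of length $n$ avoiding $\sigma$. *)

theory Defs
  imports Main "HOL-Library.Product_Lexorder"
begin

text \<open>Words are lists of naturals; positions are 0-based in the list, values are the
  letters themselves (positive integers).\<close>

definition cayley :: "nat list \<Rightarrow> bool" where
  "cayley x \<longleftrightarrow> (\<forall>v\<in>set x. 0 < v \<and> (\<forall>j\<in>{1..v}. j \<in> set x))"

definition is_perm :: "nat list \<Rightarrow> bool" where
  "is_perm x \<longleftrightarrow> cayley x \<and> distinct x"

definition contains :: "nat list \<Rightarrow> nat list \<Rightarrow> bool" where
  "contains x y \<longleftrightarrow> (\<exists>f::nat \<Rightarrow> nat.
     strict_mono_on {..<length y} f \<and> (\<forall>t<length y. f t < length x) \<and>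
     (\<forall>s<length y. \<forall>t<length y.
        (x ! f s < x ! f t \<longleftrightarrow> y ! s < y ! t) \<and> (x ! f s = x ! f t \<longleftrightarrow> y ! s = y ! t)))"

definition avoids :: "nat list \<Rightarrow> nat list \<Rightarrow> bool" where
  "avoids x y \<longleftrightarrow> \<not> contains x y"

definition gamma :: "nat list \<Rightarrow> nat list" where
  "gamma x = map snd (sort_key (\<lambda>(v, i). (v, - int i)) (zip x [1..<Suc (length x)]))"

definition cls :: "nat list \<Rightarrow> nat list set" where
  "cls y = {x. cayley x \<and> gamma x = gamma y}"

definition avoid_cls :: "nat list set \<Rightarrow> nat list \<Rightarrow> nat list set" where
  "avoid_cls E y = {x \<in> E. \<forall>z\<in>cls y. avoids x z}"

definition RGF_n :: "nat \<Rightarrow> nat list set" where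
  "RGF_n n = {x. cayley x \<and> length x = n \<and> (n \<ge> 1 \<longrightarrow> x ! 0 = 1) \<and>
     (\<forall>i. 1 \<le> i \<and> i < n \<longrightarrow> x ! i \<le> Max (set (take i x)) + 1)}"

definition RGF :: "nat list set" where
  "RGF = (\<Union>n. RGF_n n)"

text \<open>Flat: permutations avoiding the vincular pattern 23-1.\<close>
definition Flat :: "nat list set" where
  "Flat = {p. is_perm p \<and>
     \<not> (\<exists>i k. i + 1 < k \<and> k < length p \<and> p ! k < p ! i \<and> p ! i < p ! (i + 1))}"

definition Flat_av :: "nat list \<Rightarrow> nat list set" where
  "Flat_av s = {p \<in> Flat. avoids p s}"

definition Flat_n :: "nat \<Rightarrow> nat list \<Rightarrow> nat list set" where
  "Flat_n n s = {p \<in> Flat_av s. length p = n}"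

definition perm_inv :: "nat list \<Rightarrow> nat list" where
  "perm_inv s = map (\<lambda>v. Suc (LEAST i. i < length s \<and> s ! i = v)) [1..<Suc (length s)]"

end

theory Submission
  imports Defs
begin

(*
  gamma x lists the positions of x by increasing value, ties from right to left. It only
  depends on this order of the positions, and restricting x to a set of positions
  restricts the order. Hence gamma x contains gamma y iff x contains some element of the
  class [y], i.e. x avoids [y] iff gamma x avoids gamma y.

  In a restricted growth function the first occurrence of each value lies left of all
  occurrences of larger values. Therefore, reading x in the order given by gamma x, the
  value increases by one exactly at the ascents of gamma x: the value at step a is one
  plus the number of ascents of gamma x before a. This formula makes gamma injective on
  RGF, and the restricted growth condition forbids the vincular pattern 23-1 in gamma x.
  Conversely, for a flat permutation p the formula defines a word with gamma-image p, and
  the absence of 23-1 is exactly what makes this word a restricted growth function. Finally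
  gamma (sigma^-1) = sigma, as reading sigma^-1 by increasing value visits the positions
  sigma(1), sigma(2), ... in turn.
*)

lemma insort_key_map: "insort_key f (h a) (map h ys) = map h (insort_key (f \<circ> h) a ys)"
  by (induction ys) auto

lemma sort_key_map: "sort_key f (map h xs) = map h (sort_key (f \<circ> h) xs)"
  by (induction xs) (auto simp: insort_key_map comp_def)

lemma sorted_wrt_nth_iff_less:
  assumes "sorted_wrt R xs" "\<And>u v. R u v \<Longrightarrow> \<not> R v u" "a < length xs" "b < length xs"
  shows "R (xs!a) (xs!b) \<longleftrightarrow> a < b"
  using assms sorted_wrt_nth_less [OF assms(1)] by (metis linorder_neqE_nat)

lemma sorted_wrt_asym_unique:
  assumes "sorted_wrt R xs" "sorted_wrt R ys" "set xs = set ys" "distinct xs" "distinct ys"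
    and asym: "\<And>u v. R u v \<Longrightarrow> \<not> R v u"
  shows "xs = ys"
  using assms(1-5)
proof (induction xs arbitrary: ys)
  case (Cons a xs)
  then obtain b ys' where ys: "ys = b # ys'"
    by (cases ys) auto
  have "a = b"
  proof (rule ccontr)
    assume "a \<noteq> b"
    then have "R a b" "R b a"
      using Cons.prems ys by auto
    then show False
      using asym by blast
  qed
  with Cons.prems ys have "set xs = set ys'"
    by auto
  with Cons ys \<open>a = b\<close> show ?case
    by simp
qed simp

lemma ex_list_nth_permuted:
  assumes "distinct P" "set P = {..<n}"
  shows "\<exists>x. length x = n \<and> (\<forall>a<n. x ! (P!a) = f a)"
proof -
  have length_P: "length P = n"
    using distinct_card [OF assms(1)] assms(2) by simp
  have P_less: "P!a < n" if "a < n" for a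
    using nth_mem [of a P] assms(2) length_P that by auto
  have "\<forall>i. \<exists>a. i < n \<longrightarrow> a < n \<and> P!a = i"
    using assms(2) length_P by (metis in_set_conv_nth lessThan_iff)
  then obtain h where h: "\<And>i. i < n \<Longrightarrow> h i < n \<and> P ! h i = i"
    by metis
  have h_P: "h (P!a) = a" if "a < n" for a
    using h [OF P_less [OF that]] nth_eq_iff_index_eq [OF assms(1), of "h (P!a)" a] that length_P
    by simp
  have "length (map (f \<circ> h) [0..<n]) = n \<and> (\<forall>a<n. map (f \<circ> h) [0..<n] ! (P!a) = f a)"
    using P_less h_P by simp
  then show ?thesis
    by blast
qed

lemma cayley_if_set_eq_atLeastAtMost: "set x = {1..k} \<Longrightarrow> cayley x"
  by (auto simp: cayley_def)

lemma cayley_nth_pos: "cayley x \<Longrightarrow> i < length x \<Longrightarrow> 0 < x!i"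
  unfolding cayley_def by auto

lemma set_perm_eq_atLeastAtMost:
  assumes "is_perm p"
  shows "set p = {1..length p}"
proof (cases "p = []")
  case False
  define M where "M = Max (set p)"
  have cayley: "cayley p" and "distinct p"
    using assms by (auto simp: is_perm_def)
  have "M \<in> set p"
    using False by (simp add: M_def)
  then have "{1..M} \<subseteq> set p"
    using cayley unfolding cayley_def by blast
  moreover have "set p \<subseteq> {1..M}"
    using cayley by (auto simp: cayley_def M_def Suc_le_eq)
  ultimately have "set p = {1..M}"
    by blast
  moreover have "card (set p) = length p"
    using \<open>distinct p\<close> by (rule distinct_card)
  ultimately show ?thesis
    by simp
qed simp

lemma is_perm_iff_map_Suc:
  "is_perm p \<longleftrightarrow> (\<exists>P. p = map Suc P \<and> distinct P \<and> set P = {..<length p})"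
proof
  assume p: "is_perm p"
  then have set_p: "set p = {1..length p}"
    by (rule set_perm_eq_atLeastAtMost)
  define P where "P = map (\<lambda>v. v - 1) p"
  have p_P: "p = map Suc P"
    unfolding P_def map_map by (rule map_idI [symmetric]) (use set_p in auto)
  then have "Suc ` set P = Suc ` {..<length p}"
    using set_p by (simp add: image_Suc_lessThan)
  then have "set P = {..<length p}"
    by (simp add: inj_image_eq_iff)
  moreover have "distinct P"
    using p p_P by (simp add: is_perm_def distinct_map)
  ultimately show "\<exists>P. p = map Suc P \<and> distinct P \<and> set P = {..<length p}"
    using p_P by blast
next
  assume "\<exists>P. p = map Suc P \<and> distinct P \<and> set P = {..<length p}"
  then obtain P where p_P: "p = map Suc P" and "distinct P" "set P = {..<length p}"
    by blast
  then have "set p = {1..length p}"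
    by (simp add: image_Suc_lessThan)
  then have "cayley p"
    by (rule cayley_if_set_eq_atLeastAtMost)
  with p_P \<open>distinct P\<close> show "is_perm p"
    by (simp add: is_perm_def distinct_map)
qed

section \<open>The map gamma as a sort of positions\<close>

definition gamma_less :: "nat list \<Rightarrow> nat \<Rightarrow> nat \<Rightarrow> bool" where
  "gamma_less x i j \<longleftrightarrow> x!i < x!j \<or> (x!i = x!j \<and> j < i)"

definition gamma0 :: "nat list \<Rightarrow> nat list" where
  "gamma0 x = sort_key (\<lambda>i. (x!i, - int (Suc i))) [0..<length x]"

lemma gamma_eq_map_Suc_gamma0: "gamma x = map Suc (gamma0 x)"
proof -
  have "zip x [1..<Suc (length x)] = map (\<lambda>i. (x!i, Suc i)) [0..<length x]"
    by (rule nth_equalityI) (auto simp del: upt_Suc simp: nth_upt)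
  then show ?thesis
    by (simp add: gamma_def gamma0_def sort_key_map comp_def)
qed

lemma length_gamma0 [simp]: "length (gamma0 x) = length x"
  by (simp add: gamma0_def)

lemma distinct_gamma0 [simp]: "distinct (gamma0 x)"
  by (simp add: gamma0_def)

lemma set_gamma0 [simp]: "set (gamma0 x) = {..<length x}"
  by (auto simp: gamma0_def)

lemma length_gamma [simp]: "length (gamma x) = length x"
  by (simp add: gamma_eq_map_Suc_gamma0)

lemma gamma_less_asym: "gamma_less x i j \<Longrightarrow> \<not> gamma_less x j i"
  by (auto simp: gamma_less_def)

lemma gamma_less_imp_le: "gamma_less x i j \<Longrightarrow> x!i \<le> x!j"
  by (auto simp: gamma_less_def)

lemma sorted_wrt_gamma0: "sorted_wrt (gamma_less x) (gamma0 x)"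
proof -
  let ?key = "\<lambda>i. (x!i, - int (Suc i))"
  have "sorted (map ?key (gamma0 x))"
    by (simp add: gamma0_def)
  moreover have "distinct (map ?key (gamma0 x))"
    by (simp add: distinct_map inj_on_def)
  ultimately have "sorted_wrt (<) (map ?key (gamma0 x))"
    by (simp add: strict_sorted_iff)
  then have "sorted_wrt (\<lambda>i j. ?key i < ?key j) (gamma0 x)"
    by (simp add: sorted_wrt_map)
  then show ?thesis
    by (rule sorted_wrt_mono_rel [rotated]) (auto simp: gamma_less_def less_prod_def)
qed

lemma gamma_eqI:
  assumes "distinct Q" "set Q = {..<length x}" "sorted_wrt (gamma_less x) Q"
  shows "gamma x = map Suc Q"
proof -
  have "gamma0 x = Q"
    using assms by (intro sorted_wrt_asym_unique [OF sorted_wrt_gamma0]) (auto dest: gamma_less_asym)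
  then show ?thesis
    by (simp add: gamma_eq_map_Suc_gamma0)
qed

lemma gamma_eq_if_gamma_less_eq:
  assumes "length x = length y"
    and "\<And>i j. i < length x \<Longrightarrow> j < length x \<Longrightarrow> gamma_less x i j = gamma_less y i j"
  shows "gamma x = gamma y"
proof -
  have "sorted_wrt (gamma_less x) (gamma0 y)"
    using assms by (intro sorted_wrt_mono_rel [OF _ sorted_wrt_gamma0]) auto
  then show ?thesis
    using assms(1) gamma_eqI [of "gamma0 y" x] by (simp add: gamma_eq_map_Suc_gamma0)
qed

lemma gamma0_nth_less: "a < length x \<Longrightarrow> gamma0 x ! a < length x"
  using nth_mem [of a "gamma0 x"] by simp

lemma gamma0_surj: "i < length x \<Longrightarrow> \<exists>a<length x. gamma0 x ! a = i"
  using set_gamma0 [of x] by (metis in_set_conv_nth lessThan_iff length_gamma0)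

lemma gamma0_nth_eq_iff: "a < length x \<Longrightarrow> b < length x \<Longrightarrow> gamma0 x ! a = gamma0 x ! b \<longleftrightarrow> a = b"
  by (simp add: nth_eq_iff_index_eq)

lemma gamma_less_gamma0_iff:
  "a < length x \<Longrightarrow> b < length x \<Longrightarrow> gamma_less x (gamma0 x ! a) (gamma0 x ! b) \<longleftrightarrow> a < b"
  using sorted_wrt_nth_iff_less [OF sorted_wrt_gamma0 gamma_less_asym] by simp

lemma gamma0_mono: "a \<le> b \<Longrightarrow> b < length x \<Longrightarrow> x ! (gamma0 x ! a) \<le> x ! (gamma0 x ! b)"
  using gamma_less_gamma0_iff [of a x b] gamma_less_imp_le by (cases "a = b") auto

lemma cayley_gamma0_step_le:
  assumes "cayley x" "Suc a < length x"
  shows "x ! (gamma0 x ! Suc a) \<le> Suc (x ! (gamma0 x ! a))"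
proof (rule ccontr)
  let ?P = "gamma0 x" and ?v = "Suc (x ! (gamma0 x ! a))"
  assume jump: "\<not> ?thesis"
  then have "?v \<in> set x"
    using assms gamma0_nth_less [of "Suc a" x] nth_mem [of "?P ! Suc a" x]
    unfolding cayley_def by fastforce
  then obtain c where c: "c < length x" "x ! (?P ! c) = ?v"
    by (metis gamma0_surj in_set_conv_nth)
  show False
  proof (cases "c \<le> a")
    case True
    then show False
      using gamma0_mono [of c a x] assms c by simp
  next
    case False
    then show False
      using gamma0_mono [of "Suc a" c x] jump c by simp
  qed
qed

lemma gamma_perm_inv:
  assumes "is_perm s"
  shows "gamma (perm_inv s) = s"
proof -
  obtain Q where s_Q: "s = map Suc Q" and Q: "distinct Q" "set Q = {..<length s}"
    using assms is_perm_iff_map_Suc by metis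
  have length_Q: "length Q = length s" and s_nth: "\<And>i. i < length s \<Longrightarrow> s!i = Suc (Q!i)"
    using s_Q by simp_all
  have perm_inv_at_Q: "perm_inv s ! (Q!a) = Suc a" if "a < length s" for a
  proof -
    have "Q!a < length s"
      using nth_mem [of a Q] Q(2) that length_Q by auto
    then have "perm_inv s ! (Q!a) = Suc (LEAST i. i < length s \<and> s!i = Suc (Q!a))"
      by (simp add: perm_inv_def nth_upt del: upt_Suc)
    also have "(LEAST i. i < length s \<and> s!i = Suc (Q!a)) = a"
    proof (rule Least_equality)
      show "a < length s \<and> s!a = Suc (Q!a)"
        using that s_nth by simp
      fix i assume i: "i < length s \<and> s!i = Suc (Q!a)"
      then have "Q!i = Q!a"
        using s_nth by force
      then show "a \<le> i"
        using nth_eq_iff_index_eq [OF Q(1), of i a] that length_Q i by simp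
    qed
    finally show ?thesis .
  qed
  have "sorted_wrt (gamma_less (perm_inv s)) Q"
    unfolding sorted_wrt_iff_nth_less
  proof (intro allI impI)
    fix a b assume "a < b" "b < length Q"
    then show "gamma_less (perm_inv s) (Q!a) (Q!b)"
      using perm_inv_at_Q length_Q by (simp add: gamma_less_def)
  qed
  moreover have "length (perm_inv s) = length s"
    by (simp add: perm_inv_def del: upt_Suc)
  ultimately have "gamma (perm_inv s) = map Suc Q"
    using Q by (simp add: gamma_eqI)
  with s_Q show ?thesis
    by simp
qed

section \<open>Containment of gamma-images\<close>

definition rank :: "nat list \<Rightarrow> nat \<Rightarrow> nat" where
  "rank w v = card {u \<in> set w. u < v}"

definition standardize :: "nat list \<Rightarrow> nat list" where
  "standardize w = map (\<lambda>v. Suc (rank w v)) w"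

lemma rank_less_iff:
  assumes "u \<in> set w" "v \<in> set w"
  shows "rank w u < rank w v \<longleftrightarrow> u < v"
proof
  assume "u < v"
  then have "{t \<in> set w. t < u} \<subset> {t \<in> set w. t < v}"
    using assms by auto
  then show "rank w u < rank w v"
    unfolding rank_def by (intro psubset_card_mono) auto
next
  assume "rank w u < rank w v"
  moreover have "rank w v \<le> rank w u" if "v \<le> u"
    unfolding rank_def using that by (intro card_mono) auto
  ultimately show "u < v"
    by (meson not_le)
qed

lemma rank_eq_iff: "u \<in> set w \<Longrightarrow> v \<in> set w \<Longrightarrow> rank w u = rank w v \<longleftrightarrow> u = v"
  using rank_less_iff [of u w v] rank_less_iff [of v w u] by (cases u v rule: linorder_cases) auto

lemma rank_image: "rank w ` set w = {..<card (set w)}"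
proof (rule card_subset_eq)
  show "rank w ` set w \<subseteq> {..<card (set w)}"
  proof
    fix r assume "r \<in> rank w ` set w"
    then obtain v where "v \<in> set w" "r = rank w v"
      by blast
    moreover from \<open>v \<in> set w\<close> have "{u \<in> set w. u < v} \<subset> set w"
      by auto
    ultimately show "r \<in> {..<card (set w)}"
      by (simp add: rank_def psubset_card_mono)
  qed
  have "inj_on (rank w) (set w)"
    by (rule inj_onI) (simp add: rank_eq_iff)
  then show "card (rank w ` set w) = card {..<card (set w)}"
    by (simp add: card_image distinct_card)
qed simp

lemma length_standardize [simp]: "length (standardize w) = length w"
  by (simp add: standardize_def)

lemma nth_standardize: "i < length w \<Longrightarrow> standardize w ! i = Suc (rank w (w!i))"
  by (simp add: standardize_def)

lemma cayley_standardize: "cayley (standardize w)"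
proof (rule cayley_if_set_eq_atLeastAtMost)
  have "set (standardize w) = Suc ` rank w ` set w"
    by (auto simp: standardize_def)
  then show "set (standardize w) = {1..card (set w)}"
    by (simp add: rank_image image_Suc_lessThan)
qed

lemma standardize_order_iso:
  "i < length w \<Longrightarrow> j < length w \<Longrightarrow>
    (standardize w ! i < standardize w ! j \<longleftrightarrow> w!i < w!j) \<and>
    (standardize w ! i = standardize w ! j \<longleftrightarrow> w!i = w!j)"
  by (simp add: nth_standardize rank_less_iff rank_eq_iff)

lemma contains_imp_contains_gamma:
  assumes "contains x z"
  shows "contains (gamma x) (gamma z)"
proof -
  let ?P = "gamma0 x" and ?Q = "gamma0 z"
  obtain g where g_mono: "strict_mono_on {..<length z} g"
    and g_less: "\<And>t. t < length z \<Longrightarrow> g t < length x"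
    and g_iso: "\<And>s t. s < length z \<Longrightarrow> t < length z \<Longrightarrow>
      (x ! g s < x ! g t \<longleftrightarrow> z!s < z!t) \<and> (x ! g s = x ! g t \<longleftrightarrow> z!s = z!t)"
    using assms unfolding contains_def by blast
  obtain h where h: "\<And>i. i < length x \<Longrightarrow> h i < length x \<and> ?P ! h i = i"
    using gamma0_surj [of _ x] by metis
  define f where "f a = h (g (?Q ! a))" for a
  have Q_less: "\<And>a. a < length z \<Longrightarrow> ?Q ! a < length z"
    by (rule gamma0_nth_less)
  have f_less: "f a < length x" and P_f: "?P ! f a = g (?Q ! a)" if "a < length z" for a
    using h g_less Q_less that by (auto simp: f_def)
  have g_gamma_less: "gamma_less x (g i) (g j) \<longleftrightarrow> gamma_less z i j"
    if "i < length z" "j < length z" for i j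
    using that g_iso strict_mono_on_less [OF g_mono] by (auto simp: gamma_less_def)
  have "strict_mono_on {..<length z} f"
  proof (rule strict_mono_onI)
    fix a b assume ab: "a \<in> {..<length z}" "b \<in> {..<length z}" "a < b"
    then have "gamma_less x (?P ! f a) (?P ! f b)"
      using gamma_less_gamma0_iff [of a z b] g_gamma_less Q_less P_f by auto
    then show "f a < f b"
      using gamma_less_gamma0_iff f_less ab by auto
  qed
  moreover have "(g (?Q!s) < g (?Q!t) \<longleftrightarrow> ?Q!s < ?Q!t) \<and> (g (?Q!s) = g (?Q!t) \<longleftrightarrow> ?Q!s = ?Q!t)"
    if "s < length z" "t < length z" for s t
    using strict_mono_on_less [OF g_mono] strict_mono_on_eqD [OF g_mono] Q_less that
    by (metis lessThan_iff)
  ultimately show ?thesis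
    unfolding contains_def using f_less P_f
    by (intro exI [of _ f]) (auto simp: gamma_eq_map_Suc_gamma0)
qed

lemma contains_gamma_imp_contains_cls:
  assumes "contains (gamma x) (gamma y)"
  shows "\<exists>z\<in>cls y. contains x z"
proof -
  let ?P = "gamma0 x" and ?Q = "gamma0 y"
  obtain f where f_mono: "strict_mono_on {..<length y} f"
    and f_less: "\<And>t. t < length y \<Longrightarrow> f t < length x"
    and f_iso: "\<And>s t. s < length y \<Longrightarrow> t < length y \<Longrightarrow> ?P ! f s < ?P ! f t \<longleftrightarrow> ?Q ! s < ?Q ! t"
    using assms unfolding contains_def gamma_eq_map_Suc_gamma0 by auto
  obtain h where h: "\<And>i. i < length y \<Longrightarrow> h i < length y \<and> ?Q ! h i = i"
    using gamma0_surj [of _ y] by metis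
  \<comment> \<open>g t: the position of x matched with position t of y by the occurrence of gamma y\<close>
  define g where "g t = ?P ! f (h t)" for t
  have g_less: "g t < length x" if "t < length y" for t
    using that h f_less gamma0_nth_less by (simp add: g_def)
  have g_mono: "strict_mono_on {..<length y} g"
    by (rule strict_mono_onI) (use f_iso h in \<open>fastforce simp: g_def\<close>)
  define z where "z = standardize (map (\<lambda>t. x ! g t) [0..<length y])"
  have length_z: "length z = length y"
    by (simp add: z_def)
  have z_iso: "(z!s < z!t \<longleftrightarrow> x ! g s < x ! g t) \<and> (z!s = z!t \<longleftrightarrow> x ! g s = x ! g t)"
    if "s < length y" "t < length y" for s t
    using standardize_order_iso [of s "map (\<lambda>t. x ! g t) [0..<length y]" t] that
    by (simp add: z_def)
  have "contains x z"
    unfolding contains_def using g_mono g_less z_iso length_z by (intro exI [of _ g]) simp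
  moreover have "gamma z = gamma y"
  proof (rule gamma_eq_if_gamma_less_eq)
    fix i j assume "i < length z" "j < length z"
    then have ij: "i < length y" "j < length y"
      by (simp_all add: length_z)
    have "gamma_less z i j \<longleftrightarrow> gamma_less x (g i) (g j)"
      using z_iso ij strict_mono_on_less [OF g_mono] by (auto simp: gamma_less_def)
    also have "\<dots> \<longleftrightarrow> f (h i) < f (h j)"
      using gamma_less_gamma0_iff f_less h ij by (simp add: g_def)
    also have "\<dots> \<longleftrightarrow> h i < h j"
      using strict_mono_on_less [OF f_mono] h ij by simp
    also have "\<dots> \<longleftrightarrow> gamma_less y i j"
      using gamma_less_gamma0_iff [of "h i" y "h j"] h ij by simp
    finally show "gamma_less z i j \<longleftrightarrow> gamma_less y i j" .
  qed (simp add: length_z)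
  ultimately show ?thesis
    using cayley_standardize by (auto simp: cls_def z_def)
qed

lemma avoids_cls_iff_avoids_gamma: "(\<forall>z\<in>cls y. avoids x z) \<longleftrightarrow> avoids (gamma x) (gamma y)"
  using contains_imp_contains_gamma contains_gamma_imp_contains_cls
  by (fastforce simp: avoids_def cls_def)

section \<open>Restricted growth functions and flat permutations\<close>

definition ascents_before :: "nat list \<Rightarrow> nat \<Rightarrow> nat" where
  "ascents_before P a = card {b. b < a \<and> P!b < P!Suc b}"

lemma ascents_before_0 [simp]: "ascents_before P 0 = 0"
  by (simp add: ascents_before_def)

lemma ascents_before_Suc:
  "ascents_before P (Suc a) = ascents_before P a + (if P!a < P!Suc a then 1 else 0)"
proof -
  have "{b. b < Suc a \<and> P!b < P!Suc b} =
      {b. b < a \<and> P!b < P!Suc b} \<union> (if P!a < P!Suc a then {a} else {})"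
    by (auto simp: less_Suc_eq)
  then show ?thesis
    by (simp add: ascents_before_def)
qed

lemma ascents_before_less:
  assumes "a \<le> c" "c < b" "P!c < P!Suc c"
  shows "ascents_before P a < ascents_before P b"
proof -
  have "{d. d < a \<and> P!d < P!Suc d} \<subseteq> {d. d < b \<and> P!d < P!Suc d}"
    using assms by auto
  moreover have "c \<in> {d. d < b \<and> P!d < P!Suc d} - {d. d < a \<and> P!d < P!Suc d}"
    using assms by simp
  ultimately have "{d. d < a \<and> P!d < P!Suc d} \<subset> {d. d < b \<and> P!d < P!Suc d}"
    by blast
  then show ?thesis
    unfolding ascents_before_def by (rule psubset_card_mono [rotated]) simp
qed

lemma ascents_before_eq:
  assumes "a \<le> b" "\<And>c. a \<le> c \<Longrightarrow> c < b \<Longrightarrow> \<not> P!c < P!Suc c"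
  shows "ascents_before P a = ascents_before P b"
proof -
  have "{d. d < a \<and> P!d < P!Suc d} = {d. d < b \<and> P!d < P!Suc d}"
    using assms by (auto intro: ccontr)
  then show ?thesis
    by (simp add: ascents_before_def)
qed

lemma last_ascent_before:
  assumes "ascents_before P a \<noteq> 0"
  shows "\<exists>c<a. P!c < P!Suc c \<and> ascents_before P a = Suc (ascents_before P c)"
  using assms
proof (induction a)
  case (Suc a)
  show ?case
  proof (cases "P!a < P!Suc a")
    case False
    then show ?thesis
      using Suc by (auto simp: ascents_before_Suc less_Suc_eq)
  qed (auto simp: ascents_before_Suc)
qed simp

lemma nth_less_if_no_ascents:
  fixes P :: "'a::linorder list"
  assumes "distinct P" "b < length P" "a < b" "\<And>c. a \<le> c \<Longrightarrow> c < b \<Longrightarrow> \<not> P!c < P!Suc c"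
  shows "P!b < P!a"
  using assms(2-)
proof (induction b)
  case (Suc b)
  have "P!Suc b \<noteq> P!b"
    using assms(1) Suc.prems(1) by (simp add: nth_eq_iff_index_eq)
  moreover have "\<not> P!b < P!Suc b"
    using Suc.prems(2) Suc.prems(3) [of b] by simp
  ultimately have "P!Suc b < P!b"
    by (meson linorder_neqE)
  moreover have "P!b < P!a" if "a < b"
    using Suc that by simp
  ultimately show ?case
    using Suc.prems(2) by (cases "a = b") auto
qed simp

lemma sorted_wrt_gamma_less_if_nth_eq_ascents:
  assumes "distinct P" and x_P: "\<And>a. a < length P \<Longrightarrow> x ! (P!a) = Suc (ascents_before P a)"
  shows "sorted_wrt (gamma_less x) P"
  unfolding sorted_wrt_iff_nth_less
proof (intro allI impI)
  fix a b assume ab: "a < b" "b < length P"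
  show "gamma_less x (P!a) (P!b)"
  proof (cases "\<exists>c. a \<le> c \<and> c < b \<and> P!c < P!Suc c")
    case True
    then have "ascents_before P a < ascents_before P b"
      using ascents_before_less by blast
    then show ?thesis
      using x_P ab by (simp add: gamma_less_def)
  next
    case False
    then have "ascents_before P a = ascents_before P b" and "P!b < P!a"
      using ascents_before_eq nth_less_if_no_ascents [OF assms(1)] ab by auto
    then show ?thesis
      using x_P ab by (simp add: gamma_less_def)
  qed
qed

lemma mem_RGF_iff: "x \<in> RGF \<longleftrightarrow> x \<in> RGF_n (length x)"
  by (auto simp: RGF_def RGF_n_def)

lemma RGF_cayley: "x \<in> RGF \<Longrightarrow> cayley x"
  by (simp add: mem_RGF_iff RGF_n_def)

lemma RGF_nth_0: "x \<in> RGF \<Longrightarrow> x \<noteq> [] \<Longrightarrow> x!0 = 1"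
  by (simp add: mem_RGF_iff RGF_n_def Suc_le_eq)

lemma RGF_growth: "x \<in> RGF \<Longrightarrow> 1 \<le> i \<Longrightarrow> i < length x \<Longrightarrow> x!i \<le> Max (set (take i x)) + 1"
  by (simp add: mem_RGF_iff RGF_n_def)

lemma RGF_smaller_value_occurs_before:
  assumes "x \<in> RGF" "l < length x" "1 \<le> u" "u < x!l"
  shows "\<exists>k<l. x!k = u"
  using assms(2-)
proof (induction l arbitrary: u rule: less_induct)
  case (less l)
  have "x \<noteq> []"
    using less.prems by auto
  then have "l \<noteq> 0"
    using less.prems RGF_nth_0 [OF assms(1)] by (cases "l = 0") auto
  define M where "M = Max (set (take l x))"
  have "M \<in> set (take l x)"
    using \<open>l \<noteq> 0\<close> \<open>x \<noteq> []\<close> by (simp add: M_def)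
  then obtain j where j: "j < l" "x!j = M"
    using less.prems by (auto simp: in_set_conv_nth)
  have "u \<le> M"
    using RGF_growth [OF assms(1), of l] \<open>l \<noteq> 0\<close> less.prems by (simp add: M_def)
  show ?case
  proof (cases "u = M")
    case False
    then obtain k where "k < j" "x!k = u"
      using less.IH [of j u] \<open>u \<le> M\<close> j less.prems by auto
    with j show ?thesis
      using order.strict_trans by blast
  qed (use j in blast)
qed

lemma RGF_gamma0_ascent:
  assumes "x \<in> RGF" "Suc a < length x" "gamma0 x ! a < gamma0 x ! Suc a"
  shows "x ! (gamma0 x ! Suc a) = Suc (x ! (gamma0 x ! a))"
proof -
  have "gamma_less x (gamma0 x ! a) (gamma0 x ! Suc a)"
    using gamma_less_gamma0_iff assms(2) by simp
  then have "x ! (gamma0 x ! a) < x ! (gamma0 x ! Suc a)"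
    using assms(3) by (auto simp: gamma_less_def)
  with cayley_gamma0_step_le [OF RGF_cayley [OF assms(1)] assms(2)] show ?thesis
    by simp
qed

lemma RGF_gamma0_next_same_value:
  assumes "x \<in> RGF" "a < length x" "b < length x"
    and "gamma0 x ! b < gamma0 x ! a" "x ! (gamma0 x ! a) < x ! (gamma0 x ! b)"
  shows "Suc a < length x \<and> x ! (gamma0 x ! Suc a) = x ! (gamma0 x ! a)"
proof -
  let ?P = "gamma0 x"
  have "1 \<le> x ! (?P ! a)"
    using cayley_nth_pos [OF RGF_cayley [OF assms(1)]] gamma0_nth_less assms(2)
    by (simp add: Suc_le_eq)
  \<comment> \<open>the value at P!a occurs again left of P!b, so (ties go right to left) after step a\<close>
  then obtain k where k: "k < ?P ! b" "x!k = x ! (?P ! a)"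
    using RGF_smaller_value_occurs_before [OF assms(1) _ _ assms(5)] gamma0_nth_less assms(3)
    by blast
  obtain d where d: "d < length x" "?P ! d = k"
    using k gamma0_surj gamma0_nth_less [OF assms(3)] by (metis order.strict_trans)
  have "gamma_less x (?P ! a) (?P ! d)"
    using assms(4) d k by (auto simp: gamma_less_def)
  then have "a < d"
    using gamma_less_gamma0_iff [of a x d] assms(2) d(1) by simp
  then show ?thesis
    using gamma0_mono [of a "Suc a" x] gamma0_mono [of "Suc a" d x] d k by fastforce
qed

lemma RGF_gamma0_descent:
  assumes "x \<in> RGF" "Suc a < length x" "\<not> gamma0 x ! a < gamma0 x ! Suc a"
  shows "x ! (gamma0 x ! Suc a) = x ! (gamma0 x ! a)"
proof (rule ccontr)
  assume differ: "\<not> ?thesis"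
  with gamma0_mono [of a "Suc a" x] assms(2)
  have "x ! (gamma0 x ! a) < x ! (gamma0 x ! Suc a)"
    by simp
  moreover have "gamma0 x ! Suc a < gamma0 x ! a"
    using gamma0_nth_eq_iff [of a x "Suc a"] assms by simp
  ultimately show False
    using RGF_gamma0_next_same_value [OF assms(1), of a "Suc a"] assms(2) differ by simp
qed

lemma RGF_nth_gamma0:
  assumes "x \<in> RGF" "a < length x"
  shows "x ! (gamma0 x ! a) = Suc (ascents_before (gamma0 x) a)"
  using assms(2)
proof (induction a)
  case 0
  obtain c where c: "c < length x" "gamma0 x ! c = 0"
    using gamma0_surj 0 by blast
  moreover have "x \<noteq> []"
    using 0 by auto
  ultimately have "x ! (gamma0 x ! 0) \<le> 1"
    using gamma0_mono [of 0 c x] RGF_nth_0 [OF assms(1)] by auto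
  moreover have "0 < x ! (gamma0 x ! 0)"
    using cayley_nth_pos [OF RGF_cayley [OF assms(1)]] gamma0_nth_less 0 by blast
  ultimately show ?case
    by simp
next
  case (Suc a)
  then show ?case
    using RGF_gamma0_ascent [OF assms(1) Suc.prems] RGF_gamma0_descent [OF assms(1) Suc.prems]
    by (simp add: ascents_before_Suc)
qed

lemma inj_on_gamma_RGF: "inj_on gamma RGF"
proof (rule inj_onI)
  fix x x' assume x: "x \<in> RGF" and x': "x' \<in> RGF" and "gamma x = gamma x'"
  then have same: "gamma0 x = gamma0 x'"
    by (simp add: gamma_eq_map_Suc_gamma0)
  then have length: "length x = length x'"
    by (metis length_gamma0)
  show "x = x'"
  proof (rule nth_equalityI)
    fix i assume "i < length x"
    then obtain a where "a < length x" "gamma0 x ! a = i"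
      using gamma0_surj by blast
    then show "x!i = x'!i"
      using RGF_nth_gamma0 [OF x] RGF_nth_gamma0 [OF x'] same length by metis
  qed (rule length)
qed

lemma gamma_RGF_in_Flat:
  assumes "x \<in> RGF"
  shows "gamma x \<in> Flat"
proof -
  let ?P = "gamma0 x"
  have "is_perm (gamma x)"
    unfolding is_perm_iff_map_Suc gamma_eq_map_Suc_gamma0 by simp
  moreover have "\<not> (?P!k < ?P!i \<and> ?P!i < ?P!Suc i)" if "Suc i < k" "k < length x" for i k
  proof
    assume pattern: "?P!k < ?P!i \<and> ?P!i < ?P!Suc i"
    have "x ! (?P ! Suc i) = Suc (x ! (?P ! i))"
      using RGF_gamma0_ascent [OF assms] pattern that by simp
    moreover have "x ! (?P ! Suc i) \<le> x ! (?P ! k)"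
      using gamma0_mono that by simp
    ultimately show False
      using RGF_gamma0_next_same_value [OF assms, of i k] pattern that by simp
  qed
  ultimately show ?thesis
    by (auto simp: Flat_def gamma_eq_map_Suc_gamma0)
qed

lemma RGF_if_predecessor_values_earlier:
  assumes pos: "\<And>i. i < length x \<Longrightarrow> 0 < x!i"
    and pred: "\<And>i. i < length x \<Longrightarrow> 2 \<le> x!i \<Longrightarrow> \<exists>j<i. x!j = x!i - 1"
  shows "x \<in> RGF"
proof -
  have below: "u \<in> set x" if "i < length x" "1 \<le> u" "u \<le> x!i" for i u
    using that
  proof (induction i arbitrary: u rule: less_induct)
    case (less i)
    show ?case
    proof (cases "u = x!i")
      case False
      then obtain j where "j < i" "x!j = x!i - 1"
        using pred less.prems by fastforce
      then show ?thesis
        using less False by auto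
    qed (use less.prems in simp)
  qed
  then have "cayley x"
    unfolding cayley_def using pos by (fastforce simp: in_set_conv_nth)
  moreover have "x!0 = 1" if "x \<noteq> []"
    using pos [of 0] pred [of 0] that by fastforce
  moreover have "x!i \<le> Max (set (take i x)) + 1" if i: "i < length x" for i
  proof (cases "2 \<le> x!i")
    case True
    then obtain j where j: "j < i" "x!j = x!i - 1"
      using pred i by blast
    then have "x!j \<in> set (take i x)"
      using nth_mem [of j "take i x"] i by simp
    then have "x!j \<le> Max (set (take i x))"
      by simp
    with j show ?thesis
      by simp
  qed simp
  ultimately show ?thesis
    by (auto simp: mem_RGF_iff RGF_n_def Suc_le_eq)
qed

lemma RGF_if_nth_eq_ascents:
  assumes "distinct P" "set P = {..<length x}"
    and x_P: "\<And>a. a < length x \<Longrightarrow> x ! (P!a) = Suc (ascents_before P a)"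
    and no_23_1: "\<And>i k. Suc i < k \<Longrightarrow> k < length x \<Longrightarrow> \<not> (P!k < P!i \<and> P!i < P!Suc i)"
  shows "x \<in> RGF"
proof (rule RGF_if_predecessor_values_earlier)
  have length_P: "length P = length x"
    using distinct_card [OF assms(1)] assms(2) by simp
  fix i assume "i < length x"
  then obtain a where a: "a < length x" "P!a = i"
    using assms(2) length_P by (metis in_set_conv_nth lessThan_iff)
  then show "0 < x!i"
    using x_P by auto
  assume "2 \<le> x!i"
  \<comment> \<open>x!i - 1 is the value at P!c for the last ascent c before a; 23-1 puts P!c left of P!a\<close>
  then obtain c where c: "c < a" "P!c < P!Suc c" "ascents_before P a = Suc (ascents_before P c)"
    using last_ascent_before [of P a] x_P a by auto
  have "P!c < P!a"
  proof (cases "a = Suc c")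
    case False
    then have "\<not> P!a < P!c"
      using no_23_1 [of c a] c a by simp
    moreover have "P!a \<noteq> P!c"
      using nth_eq_iff_index_eq [OF assms(1), of a c] a(1) c(1) length_P by simp
    ultimately show ?thesis
      by simp
  qed (use c in simp)
  moreover have "x ! (P!c) = x!i - 1"
    using x_P [of a] x_P [of c] a c by simp
  ultimately show "\<exists>j<i. x!j = x!i - 1"
    using a by blast
qed

lemma Flat_subset_gamma_RGF: "Flat \<subseteq> gamma ` RGF"
proof
  fix p assume p: "p \<in> Flat"
  then have "is_perm p"
    by (simp add: Flat_def)
  then obtain P where p_P: "p = map Suc P" and P: "distinct P" "set P = {..<length p}"
    using is_perm_iff_map_Suc by metis
  obtain x where length_x: "length x = length p"
    and x_P: "\<And>a. a < length p \<Longrightarrow> x ! (P!a) = Suc (ascents_before P a)"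
    using ex_list_nth_permuted [OF P, of "Suc \<circ> ascents_before P"] by auto
  have no_23_1: "\<not> (P!k < P!i \<and> P!i < P!Suc i)" if "Suc i < k" "k < length x" for i k
  proof -
    have "\<not> (p!k < p!i \<and> p!i < p!Suc i)"
      using p that length_x unfolding Flat_def by fastforce
    then show ?thesis
      using that length_x by (simp add: p_P)
  qed
  have "sorted_wrt (gamma_less x) P"
    using P x_P by (intro sorted_wrt_gamma_less_if_nth_eq_ascents) (simp_all add: p_P)
  then have "gamma x = p"
    using P length_x p_P by (simp add: gamma_eqI)
  moreover have "x \<in> RGF"
    using P length_x x_P no_23_1 by (intro RGF_if_nth_eq_ascents) simp_all
  ultimately show "p \<in> gamma ` RGF"
    by blast
qed

lemma gamma_RGF_eq_Flat: "gamma ` RGF = Flat"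
  using Flat_subset_gamma_RGF gamma_RGF_in_Flat by blast

lemma gamma_avoid_cls_RGF: "gamma ` avoid_cls RGF y = Flat_av (gamma y)"
proof -
  have "gamma ` avoid_cls RGF y = {p \<in> gamma ` RGF. avoids p (gamma y)}"
    by (auto simp: avoid_cls_def avoids_cls_iff_avoids_gamma)
  then show ?thesis
    by (simp add: gamma_RGF_eq_Flat Flat_av_def)
qed

lemma avoid_cls_RGF_n: "avoid_cls (RGF_n n) w = {x \<in> avoid_cls RGF w. length x = n}"
  by (auto simp: avoid_cls_def RGF_def RGF_n_def)

theorem theorem6p4:
  fixes \<sigma> y :: "nat list"
  assumes "is_perm \<sigma>" and "cayley y"
  shows "Flat_av \<sigma> = gamma ` avoid_cls RGF (perm_inv \<sigma>)
     \<and> gamma ` avoid_cls RGF y = Flat_av (gamma y)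
     \<and> (\<forall>n. card (Flat_n n \<sigma>) = card (avoid_cls (RGF_n n) (perm_inv \<sigma>)))"
proof (intro conjI allI)
  show Flat_av: "Flat_av \<sigma> = gamma ` avoid_cls RGF (perm_inv \<sigma>)"
    using gamma_avoid_cls_RGF [of "perm_inv \<sigma>"] gamma_perm_inv [OF assms(1)] by simp
  show "gamma ` avoid_cls RGF y = Flat_av (gamma y)"
    by (rule gamma_avoid_cls_RGF)
  fix n
  have "Flat_n n \<sigma> = gamma ` avoid_cls (RGF_n n) (perm_inv \<sigma>)"
    unfolding Flat_n_def Flat_av avoid_cls_RGF_n by auto
  moreover have "inj_on gamma (avoid_cls (RGF_n n) (perm_inv \<sigma>))"
    by (rule inj_on_subset [OF inj_on_gamma_RGF]) (auto simp: avoid_cls_def RGF_def)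
  ultimately show "card (Flat_n n \<sigma>) = card (avoid_cls (RGF_n n) (perm_inv \<sigma>))"
    by (simp add: card_image)
qed

end
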